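(* Let $E \subseteq \mathbb{R}$. If $\dim_{\mathrm{CM}}(E) > 0$, then there exist $n \in \mathbb{N}$ and a linear map $T : \mathbb{R}^n \to \mathbb{R}$ such that $T(E^n)$ is dense in $\mathbb{R}$. In particular, if there is a real $s > 0$ such that $\mathscr{N}((-r,r) \cap E) \geq r^s$ for all sufficiently large $r \in \mathbb{R}$, then there exist $n \in \mathbb{N}$ and a linear $T : \mathbb{R}^n \to \mathbb{R}$ such that $T(E^n)$ is dense.
   Context: For a bounded $X \subseteq \mathbb{R}^n$, $\mathscr{M}(1,X)$ denotes the minimum number of open balls of radius $1$ needed to cover $X$. Let $B_n(r)$ be the open ball in $\mathbb{R}^n$ of radius $r$ centered at $0$. The coarse Minkowski dimension of $Z \subseteq \mathbb{R}^n$ is $\dim_{\mathrm{CM}}(Z) := \limsup_{r \to \infty} \frac{\log \mathscr{M}(1, B_n(r) \cap Z)}{\log r}$. For bounded $X \subseteq \mathbb{R}$, $\mathscr{N}(X)$ is the number of integers $k$ such that $[k,k+1] \cap X \neq \emptyset$. $E^n$ denotes the $n$-fold Cartesian power of $E$. *)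

theory Defs
  imports "HOL-Analysis.Analysis"
begin

definition cover_num :: "'a::metric_space set \<Rightarrow> nat" where
  "cover_num X = (LEAST m. \<exists>C. finite C \<and> card C = m \<and> X \<subseteq> (\<Union>c\<in>C. ball c 1))"

definition dim_CM :: "real set \<Rightarrow> ereal" where
  "dim_CM Z = Limsup at_top (\<lambda>r::real. ereal (ln (real (cover_num (ball 0 r \<inter> Z))) / ln r))"

definition N_count :: "real set \<Rightarrow> nat" where
  "N_count X = card {k::int. {real_of_int k..real_of_int k + 1} \<inter> X \<noteq> {}}"

text \<open>Image of E^n under the linear map R^n \<rightarrow> R, x \<mapsto> \<Sum>i<n. a i * x i
  (every linear map R^n \<rightarrow> R has this form); points of R^n are functions on {0..<n}.\<close>
definition lin_image :: "nat \<Rightarrow> (nat \<Rightarrow> real) \<Rightarrow> real set \<Rightarrow> real set" where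
  "lin_image n a E = {(\<Sum>i<n. a i * x i) | x. \<forall>i<n. x i \<in> E}"

end

theory Submission
  imports Defs
begin

text \<open>Growth of the covering numbers yields, for arbitrarily large \<open>r\<close>, a set \<open>P\<close> of points of
  \<open>E \<inter> (-r, r)\<close> that are pairwise at distance at least \<open>L\<close> and number at least about \<open>r\<^sup>s / L\<close>.
  If \<open>s m > 1\<close>, the tuples in \<open>P\<^sup>m\<close> are superlinearly many in \<open>r\<close>, whereas a linear form with fixed
  coefficients maps them into an interval of length \<open>O(r)\<close>; by pigeonhole two tuples \<open>x \<noteq> y\<close>
  satisfy \<open>|\<Sum> c\<^sub>i (x\<^sub>i - y\<^sub>i)| < \<eta>\<close> while \<open>|x\<^sub>j - y\<^sub>j| \<ge> L\<close> for some \<open>j\<close>. Changing \<open>c\<^sub>j\<close> by the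
  small amount \<open>(t - \<Sum> c\<^sub>i (x\<^sub>i - y\<^sub>i)) / (x\<^sub>j - y\<^sub>j)\<close> then makes the form hit \<open>t\<close> exactly. So for
  every rational \<open>q\<close> and \<open>\<epsilon> > 0\<close>, the coefficient vectors \<open>a\<close> for which some
  \<open>\<Sum> a\<^sub>i (x\<^sub>i - y\<^sub>i)\<close> with \<open>x, y \<in> E\<^sup>m\<close> lies within \<open>\<epsilon>\<close> of \<open>q\<close> form an open dense set. By
  Baire's theorem some \<open>a\<close> lies in all of them, and then \<open>(x, y) \<mapsto> \<Sum> a\<^sub>i (x\<^sub>i - y\<^sub>i)\<close> maps
  \<open>E\<^bsup>2m\<^esup>\<close> onto a dense set.\<close>

definition unit_cells :: "real set \<Rightarrow> int set" where
  "unit_cells X = {k. {real_of_int k..real_of_int k + 1} \<inter> X \<noteq> {}}"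

lemma N_count_eq_card_unit_cells: "N_count X = card (unit_cells X)"
  by (simp add: N_count_def unit_cells_def)

lemma finite_unit_cells:
  assumes "bounded X"
  shows "finite (unit_cells X)"
proof -
  obtain b where b: "\<And>x. x \<in> X \<Longrightarrow> \<bar>x\<bar> \<le> b"
    using assms by (auto simp: bounded_real)
  have "unit_cells X \<subseteq> {\<lfloor>-b\<rfloor> - 1..\<lceil>b\<rceil>}"
  proof
    fix k assume "k \<in> unit_cells X"
    then obtain x where "x \<in> X" "real_of_int k \<le> x" "x \<le> real_of_int k + 1"
      by (auto simp: unit_cells_def)
    with b[of x] show "k \<in> {\<lfloor>-b\<rfloor> - 1..\<lceil>b\<rceil>}"
      by (simp add: floor_le_iff le_ceiling_iff) linarith
  qed
  then show ?thesis
    using finite_subset by blast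
qed

lemma cover_num_le_N_count:
  assumes "bounded X"
  shows "cover_num X \<le> N_count X"
proof -
  define C where "C = (\<lambda>k. real_of_int k + 1/2) ` unit_cells X"
  have "X \<subseteq> (\<Union>c\<in>C. ball c 1)"
  proof
    fix x assume "x \<in> X"
    then have "x \<in> {real_of_int \<lfloor>x\<rfloor>..real_of_int \<lfloor>x\<rfloor> + 1} \<inter> X"
      by simp
    then have "\<lfloor>x\<rfloor> \<in> unit_cells X"
      unfolding unit_cells_def by blast
    moreover have "x \<in> ball (real_of_int \<lfloor>x\<rfloor> + 1/2) 1"
      by (simp add: dist_real_def) linarith
    ultimately show "x \<in> (\<Union>c\<in>C. ball c 1)"
      by (auto simp: C_def)
  qed
  moreover have "finite C"
    using finite_unit_cells[OF assms] by (simp add: C_def)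
  ultimately have "cover_num X \<le> card C"
    unfolding cover_num_def by (intro Least_le) blast
  also have "card C \<le> N_count X"
    unfolding C_def N_count_eq_card_unit_cells by (rule card_image_le[OF finite_unit_cells[OF assms]])
  finally show ?thesis .
qed

definition frequent_growth :: "real set \<Rightarrow> real \<Rightarrow> bool" where
  "frequent_growth E s \<longleftrightarrow> (\<exists>\<^sub>F r in at_top. r powr s \<le> real (N_count ({-r<..<r} \<inter> E)))"

lemma frequent_growth_if_dim_CM_pos:
  assumes "dim_CM E > 0"
  obtains s where "s > 0" "frequent_growth E s"
proof -
  define f where "f = (\<lambda>r::real. ereal (ln (real (cover_num (ball 0 r \<inter> E))) / ln r))"
  obtain s where s: "0 < ereal s" "ereal s < Limsup at_top f"
    using ereal_dense2[OF assms[unfolded dim_CM_def]] by (auto simp: f_def)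
  have "\<exists>\<^sub>F r in at_top. ereal s < f r"
    using s(2) Limsup_bounded[of f "ereal s" at_top] not_frequently by (force simp: not_less)
  moreover have "\<forall>\<^sub>F r in at_top. 1 < (r::real)"
    by (rule eventually_gt_at_top)
  ultimately have "\<exists>\<^sub>F r in at_top. 1 < r \<and> ereal s < f r"
    by (rule frequently_eventually_conj)
  then have "frequent_growth E s"
    unfolding frequent_growth_def
  proof (rule frequently_elim1, elim conjE)
    fix r :: real assume r: "1 < r" "ereal s < f r"
    define c where "c = cover_num (ball 0 r \<inter> E)"
    have "s * ln r < ln (real c)"
      using r by (simp add: f_def c_def field_simps)
    moreover have "0 < s * ln r"
      using s r by simp
    ultimately have "c > 0"
      by (cases "c = 0") auto
    with \<open>s * ln r < ln (real c)\<close> have "r powr s < real c"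
      using r by (simp add: powr_def ln_less_cancel_iff[symmetric] mult.commute)
    also have "c \<le> N_count ({-r<..<r} \<inter> E)"
      unfolding c_def using cover_num_le_N_count[of "ball 0 r \<inter> E"]
      by (simp add: bounded_Int ball_eq_greaterThanLessThan)
    finally show "r powr s \<le> real (N_count ({-r<..<r} \<inter> E))"
      by simp
  qed
  with s show ?thesis
    using that by simp
qed

lemma separated_subset_of_N_count:
  assumes "bounded X" "M \<ge> 2"
  obtains P where "P \<subseteq> X" "finite P" "real (N_count X) \<le> real M * real (card P)"
    "\<And>p q. p \<in> P \<Longrightarrow> q \<in> P \<Longrightarrow> p \<noteq> q \<Longrightarrow> real M - 1 \<le> \<bar>p - q\<bar>"
proof -
  define K where "K = unit_cells X"
  have "finite K"
    unfolding K_def using assms(1) by (rule finite_unit_cells)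
  obtain c where c: "card K \<le> card ((\<lambda>k. k mod int M) -` {c} \<inter> K) * card {0..<int M}"
    using pigeonhole_card[of "\<lambda>k. k mod int M" K "{0..<int M}"] \<open>finite K\<close> assms(2) by auto
  define F where "F = (\<lambda>k. k mod int M) -` {c} \<inter> K"
  have "\<forall>k\<in>F. \<exists>x\<in>X. real_of_int k \<le> x \<and> x \<le> real_of_int k + 1"
    by (auto simp: F_def K_def unit_cells_def)
  then obtain pt where pt: "\<And>k. k \<in> F \<Longrightarrow> pt k \<in> X \<and> real_of_int k \<le> pt k \<and> pt k \<le> real_of_int k + 1"
    by metis
  have far: "real M - 1 \<le> \<bar>pt k - pt k'\<bar>" if "k \<in> F" "k' \<in> F" "k \<noteq> k'" for k k'
  proof -
    have "k mod int M = k' mod int M"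
      using that by (simp add: F_def)
    then have "int M dvd k - k'"
      by (simp add: mod_eq_dvd_iff)
    then have "int M \<le> \<bar>k - k'\<bar>"
      using dvd_imp_le_int[of "k - k'" "int M"] that(3) by simp
    then have "real M \<le> \<bar>real_of_int k - real_of_int k'\<bar>"
      by (metis of_int_abs of_int_diff of_int_le_iff of_int_of_nat_eq)
    then show ?thesis
      using pt[OF that(1)] pt[OF that(2)] by linarith
  qed
  have "inj_on pt F"
    using far assms(2) by (fastforce simp: inj_on_def)
  show ?thesis
  proof
    show "pt ` F \<subseteq> X" "finite (pt ` F)"
      using pt \<open>finite K\<close> by (auto simp: F_def)
    show "real (N_count X) \<le> real M * real (card (pt ` F))"
      using c \<open>inj_on pt F\<close> by (simp add: N_count_eq_card_unit_cells K_def F_def card_image mult.commute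
          flip: of_nat_mult)
    show "real M - 1 \<le> \<bar>p - q\<bar>" if "p \<in> pt ` F" "q \<in> pt ` F" "p \<noteq> q" for p q
      using that far by blast
  qed
qed

lemma pigeonhole_close_values:
  fixes f :: "'a \<Rightarrow> real"
  assumes "finite D" "f ` D \<subseteq> {u..v}" "u \<le> v" "\<eta> > 0" "(v - u) / \<eta> + 1 < real (card D)"
  obtains x y where "x \<in> D" "y \<in> D" "x \<noteq> y" "\<bar>f x - f y\<bar> < \<eta>"
proof -
  define g where "g x = \<lfloor>(f x - u) / \<eta>\<rfloor>" for x
  have "g ` D \<subseteq> {0..\<lfloor>(v - u) / \<eta>\<rfloor>}"
    using assms(2,4) by (fastforce simp: g_def intro!: floor_mono divide_right_mono)
  then have "card (g ` D) \<le> card {0..\<lfloor>(v - u) / \<eta>\<rfloor>}"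
    by (intro card_mono) auto
  also have "\<dots> = nat (\<lfloor>(v - u) / \<eta>\<rfloor> + 1)"
    by simp
  also have "real \<dots> \<le> (v - u) / \<eta> + 1"
    using assms(3,4) by simp
  finally have "card (g ` D) < card D"
    using assms(5) by linarith
  then obtain x y where xy: "x \<in> D" "y \<in> D" "x \<noteq> y" "g x = g y"
    using pigeonhole[of g D] unfolding inj_on_def by blast
  then have "\<bar>(f x - u) / \<eta> - (f y - u) / \<eta>\<bar> < 1"
    unfolding g_def by linarith
  then have "\<bar>f x - f y\<bar> < \<eta>"
    using assms(4) by (simp add: diff_divide_distrib[symmetric] abs_divide)
  with xy show ?thesis
    using that by blast
qed

lemma eventually_linear_less_powr:
  fixes a b q :: real
  assumes "1 < q"
  shows "\<forall>\<^sub>F r in at_top. a * r + b < r powr q"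
proof -
  define C where "C = \<bar>a\<bar> + \<bar>b\<bar> + 1"
  have "C > 0"
    by (simp add: C_def add_nonneg_pos)
  have "\<forall>\<^sub>F r in at_top. C powr (1 / (q - 1)) \<le> r \<and> 1 \<le> r"
    by (intro eventually_conj eventually_ge_at_top)
  then show ?thesis
  proof (rule eventually_mono, elim conjE)
    fix r :: real assume r: "C powr (1 / (q - 1)) \<le> r" "1 \<le> r"
    have "C = (C powr (1 / (q - 1))) powr (q - 1)"
      using assms \<open>C > 0\<close> by (simp add: powr_powr)
    also have "\<dots> \<le> r powr (q - 1)"
      using r assms by (intro powr_mono2) auto
    finally have "C * r \<le> r * r powr (q - 1)"
      using r by (simp add: mult.commute)
    also have "r * r powr (q - 1) = r powr q"
      using r by (simp add: powr_mult_base)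
    finally have "C * r \<le> r powr q" .
    moreover have "a * r \<le> \<bar>a\<bar> * r" "\<bar>b\<bar> * 1 \<le> \<bar>b\<bar> * r"
      using r by (intro mult_right_mono mult_left_mono; simp)+
    then have "a * r + b < C * r"
      using r unfolding C_def distrib_right by linarith
    ultimately show "a * r + b < r powr q"
      by linarith
  qed
qed

lemma separated_subset_superlinear_power:
  assumes growth: "frequent_growth E s" and sm: "1 < s * real m" and "M \<ge> 2"
  obtains r P where "1 \<le> r" "P \<subseteq> {-r<..<r} \<inter> E" "finite P"
    "\<And>p q. p \<in> P \<Longrightarrow> q \<in> P \<Longrightarrow> p \<noteq> q \<Longrightarrow> real M - 1 \<le> \<bar>p - q\<bar>"
    "a * r + b < real (card P) ^ m"
proof -
  have "\<forall>\<^sub>F r in at_top. 1 \<le> r \<and> (a * real M ^ m) * r + b * real M ^ m < r powr (s * real m)"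
    by (intro eventually_conj eventually_ge_at_top eventually_linear_less_powr sm)
  with growth obtain r where r: "1 \<le> r" "r powr s \<le> real (N_count ({-r<..<r} \<inter> E))"
      "(a * real M ^ m) * r + b * real M ^ m < r powr (s * real m)"
    unfolding frequent_growth_def by (blast elim: frequentlyE dest: frequently_eventually_conj)
  obtain P where P: "P \<subseteq> {-r<..<r} \<inter> E" "finite P"
      "real (N_count ({-r<..<r} \<inter> E)) \<le> real M * real (card P)"
      "\<And>p q. p \<in> P \<Longrightarrow> q \<in> P \<Longrightarrow> p \<noteq> q \<Longrightarrow> real M - 1 \<le> \<bar>p - q\<bar>"
    using separated_subset_of_N_count[of "{-r<..<r} \<inter> E" M] \<open>M \<ge> 2\<close> by (auto simp: bounded_Int)
  have M: "real M ^ m > 0"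
    using \<open>M \<ge> 2\<close> by simp
  have "a * r + b < r powr (s * real m) / real M ^ m"
    using r(3) M by (simp add: field_simps)
  also have "r powr (s * real m) = (r powr s) powr real m"
    by (simp add: powr_powr)
  also have "\<dots> = (r powr s) ^ m"
    using r(1) by (simp add: powr_realpow)
  also have "(r powr s) ^ m / real M ^ m = (r powr s / real M) ^ m"
    by (simp add: power_divide)
  also have "\<dots> \<le> real (card P) ^ m"
    using r(2) P(3) \<open>M \<ge> 2\<close> by (intro power_mono) (simp_all add: field_simps)
  finally show ?thesis
    using that r(1) P by blast
qed

lemma far_pair_with_small_form:
  fixes c :: "nat \<Rightarrow> real"
  assumes growth: "frequent_growth E s" and sm: "1 < s * real m" and "\<eta> > 0"
  obtains x y j where "\<forall>i<m. x i \<in> E \<and> y i \<in> E" "j < m" "L \<le> \<bar>x j - y j\<bar>"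
    "\<bar>\<Sum>i<m. c i * (x i - y i)\<bar> < \<eta>"
proof -
  define A where "A = (\<Sum>i<m. \<bar>c i\<bar>)"
  define M where "M = nat \<lceil>L\<rceil> + 2"
  have "M \<ge> 2" "L \<le> real M - 1"
    unfolding M_def by linarith+
  obtain r P where r: "1 \<le> r" and P: "P \<subseteq> {-r<..<r} \<inter> E" "finite P"
      "\<And>p q. p \<in> P \<Longrightarrow> q \<in> P \<Longrightarrow> p \<noteq> q \<Longrightarrow> real M - 1 \<le> \<bar>p - q\<bar>"
      "2 * A / \<eta> * r + 1 < real (card P) ^ m"
    using separated_subset_superlinear_power[OF growth sm \<open>M \<ge> 2\<close>] by blast
  define D where "D = PiE {..<m} (\<lambda>_. P)"
  define f where "f \<kappa> = (\<Sum>i<m. c i * \<kappa> i)" for \<kappa>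
  have "\<bar>f \<kappa>\<bar> \<le> A * r" if "\<kappa> \<in> D" for \<kappa>
  proof -
    have "\<bar>\<kappa> i\<bar> \<le> r" if "i < m" for i
      using that \<open>\<kappa> \<in> D\<close> P(1) by (fastforce simp: D_def)
    then have "\<bar>f \<kappa>\<bar> \<le> (\<Sum>i<m. \<bar>c i\<bar> * r)"
      unfolding f_def by (intro sum_abs[THEN order_trans] sum_mono) (simp add: abs_mult mult_left_mono)
    then show ?thesis
      by (simp add: A_def sum_distrib_right)
  qed
  then have range: "f ` D \<subseteq> {-(A * r)..A * r}"
    by fastforce
  have card: "(A * r - - (A * r)) / \<eta> + 1 < real (card D)"
    using P(4) by (simp add: D_def card_PiE field_simps)
  have "- (A * r) \<le> A * r"
    using r by (simp add: A_def sum_nonneg)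
  moreover have "finite D"
    using P(2) by (simp add: D_def finite_PiE)
  ultimately obtain \<kappa> \<kappa>' where \<kappa>: "\<kappa> \<in> D" "\<kappa>' \<in> D" "\<kappa> \<noteq> \<kappa>'" "\<bar>f \<kappa> - f \<kappa>'\<bar> < \<eta>"
    using pigeonhole_close_values[OF _ range _ \<open>\<eta> > 0\<close> card] by blast
  then obtain j where j: "j < m" "\<kappa> j \<noteq> \<kappa>' j"
    using PiE_ext[of \<kappa> "{..<m}" "\<lambda>_. P" \<kappa>'] unfolding D_def by auto
  show ?thesis
  proof
    show "\<forall>i<m. \<kappa> i \<in> E \<and> \<kappa>' i \<in> E"
      using \<kappa>(1,2) P(1) by (auto simp: D_def)
    have "\<kappa> j \<in> P" "\<kappa>' j \<in> P"
      using \<kappa>(1,2) j(1) by (auto simp: D_def)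
    then have "real M - 1 \<le> \<bar>\<kappa> j - \<kappa>' j\<bar>"
      using P(3) j(2) by blast
    with \<open>L \<le> real M - 1\<close> show "L \<le> \<bar>\<kappa> j - \<kappa>' j\<bar>"
      by linarith
    show "\<bar>\<Sum>i<m. c i * (\<kappa> i - \<kappa>' i)\<bar> < \<eta>"
      using \<kappa>(4) by (simp add: f_def right_diff_distrib sum_subtractf)
  qed (rule j(1))
qed

lemma dist_fun_upd_le:
  fixes f :: "'a::countable \<Rightarrow> 'b::metric_space"
  shows "dist (f(i := y)) f \<le> 2 * dist y (f i)"
proof (rule field_le_epsilon)
  fix e :: real assume "e > 0"
  then obtain N where N: "(1/2) ^ N < e"
    using real_arch_pow_inv[of e "1/2"] by auto
  have "Max {dist ((f(i := y)) (from_nat n)) (f (from_nat n)) |n. n \<le> N} \<le> dist y (f i)"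
    by (rule Max.boundedI) auto
  then show "dist (f(i := y)) f \<le> 2 * dist y (f i) + e"
    using dist_fun_le_dist_first_terms[of "f(i := y)" f N] N by linarith
qed

lemma sum_lessThan_add:
  fixes g :: "nat \<Rightarrow> 'a::comm_monoid_add"
  shows "(\<Sum>i<m + k. g i) = (\<Sum>i<m. g i) + (\<Sum>i<k. g (m + i))"
  by (induction k) (simp_all add: add.assoc)

definition diff_form_values :: "nat \<Rightarrow> real set \<Rightarrow> (nat \<Rightarrow> real) \<Rightarrow> real set" where
  "diff_form_values m E a = {\<Sum>i<m. a i * (x i - y i) | x y. \<forall>i<m. x i \<in> E \<and> y i \<in> E}"

lemma diff_form_values_subset_lin_image:
  "diff_form_values m E a \<subseteq> lin_image (2 * m) (\<lambda>i. if i < m then a i else - a (i - m)) E"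
proof
  fix v assume "v \<in> diff_form_values m E a"
  then obtain x y where xy: "\<forall>i<m. x i \<in> E \<and> y i \<in> E" and v: "v = (\<Sum>i<m. a i * (x i - y i))"
    by (auto simp: diff_form_values_def)
  define w where "w i = (if i < m then x i else y (i - m))" for i
  have "(\<Sum>i<2 * m. (if i < m then a i else - a (i - m)) * w i)
      = (\<Sum>i<m. a i * x i) + (\<Sum>i<m. - a i * y i)"
    unfolding mult_2 sum_lessThan_add by (simp add: w_def)
  also have "\<dots> = v"
    by (simp add: v right_diff_distrib sum_subtractf sum_negf)
  finally show "v \<in> lin_image (2 * m) (\<lambda>i. if i < m then a i else - a (i - m)) E"
    unfolding lin_image_def using xy by (force simp: w_def)
qed

lemma near_coefficients_attaining_value:
  fixes a0 :: "nat \<Rightarrow> real"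
  assumes growth: "frequent_growth E s" and sm: "1 < s * real m" and "e > 0"
  obtains a where "dist a a0 < e" "t \<in> diff_form_values m E a"
proof -
  define L where "L = 4 * (\<bar>t\<bar> + 1) / e"
  have "L > 0"
    using \<open>e > 0\<close> by (simp add: L_def)
  obtain x y j where xy: "\<forall>i<m. x i \<in> E \<and> y i \<in> E" and j: "j < m" "L \<le> \<bar>x j - y j\<bar>"
      and small: "\<bar>\<Sum>i<m. a0 i * (x i - y i)\<bar> < 1"
    using far_pair_with_small_form[OF growth sm, of 1 L a0] by auto
  define d where "d i = x i - y i" for i
  define S where "S = (\<Sum>i<m. a0 i * d i)"
  define \<delta> where "\<delta> = (t - S) / d j"
  define a where "a = a0(j := a0 j + \<delta>)"
  have "d j \<noteq> 0"
    using j(2) \<open>L > 0\<close> by (auto simp: d_def)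
  have "a i * d i = a0 i * d i + (if i = j then \<delta> * d j else 0)" for i
    by (simp add: a_def distrib_right)
  then have "(\<Sum>i<m. a i * d i) = S + \<delta> * d j"
    using j(1) by (simp add: S_def sum.distrib)
  also have "\<dots> = t"
    using \<open>d j \<noteq> 0\<close> by (simp add: \<delta>_def)
  finally have "t \<in> diff_form_values m E a"
    unfolding diff_form_values_def d_def using xy by blast
  have "\<bar>\<delta>\<bar> \<le> (\<bar>t\<bar> + 1) / L"
    unfolding \<delta>_def abs_divide
    using small j(2) \<open>L > 0\<close> by (intro frac_le) (auto simp: S_def d_def)
  also have "(\<bar>t\<bar> + 1) / L = e / 4"
    unfolding L_def using \<open>e > 0\<close> by (simp add: field_simps add_nonneg_pos)
  finally have "dist a a0 < e"
    using dist_fun_upd_le[of a0 j "a0 j + \<delta>"] \<open>e > 0\<close> by (simp add: a_def dist_real_def)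
  with \<open>t \<in> diff_form_values m E a\<close> show ?thesis
    using that by blast
qed

lemma open_near_diff_form_values: "open {a. \<exists>v\<in>diff_form_values m E a. \<bar>v - q\<bar> < \<epsilon>}"
proof -
  have "continuous_on UNIV (\<lambda>a::nat \<Rightarrow> real. a i)" for i
    by simp
  then have "open {a. \<bar>(\<Sum>i<m. a i * d i) - q\<bar> < \<epsilon>}" for d
    by (intro open_Collect_less continuous_intros) auto
  moreover have "{a. \<exists>v\<in>diff_form_values m E a. \<bar>v - q\<bar> < \<epsilon>}
      = (\<Union>(x, y)\<in>{(x, y). \<forall>i<m. x i \<in> E \<and> y i \<in> E}.
           {a. \<bar>(\<Sum>i<m. a i * (x i - y i)) - q\<bar> < \<epsilon>})"
    by (auto simp: diff_form_values_def)
  ultimately show ?thesis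
    by (auto intro!: open_UN)
qed

text \<open>Baire's theorem is applied in the complete metric space \<^typ>\<open>nat \<Rightarrow> real\<close> of coefficient
  sequences with the product topology; only the first \<open>m\<close> coefficients matter.\<close>

lemma ex_dense_diff_form_values:
  assumes growth: "frequent_growth E s" and sm: "1 < s * real m"
  obtains a where "closure (diff_form_values m E a) = UNIV"
proof -
  define U where "U = (\<lambda>(q, k). {a. \<exists>v\<in>diff_form_values m E a. \<bar>v - q\<bar> < 1 / Suc k})"
  define G where "G = U ` (\<rat> \<times> UNIV)"
  have "closure (U qk) = UNIV" for qk
  proof -
    obtain q k where qk: "qk = (q, k)"
      by fastforce
    have "a0 \<in> closure (U qk)" for a0
      unfolding closure_approachable
    proof (intro allI impI)
      fix e :: real assume "e > 0"
      then obtain a where "dist a a0 < e" "q \<in> diff_form_values m E a"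
        using near_coefficients_attaining_value[OF growth sm] by blast
      then show "\<exists>a\<in>U qk. dist a a0 < e"
        by (force simp: U_def qk)
    qed
    then show ?thesis
      by blast
  qed
  moreover have "open (U qk)" for qk
    using open_near_diff_form_values by (simp add: U_def split: prod.splits)
  moreover have "countable G"
    by (simp add: G_def countable_rat)
  ultimately have "euclidean closure_of \<Inter>G = topspace euclidean"
    using completely_metrizable_space_euclidean by (intro Baire_category) (auto simp: G_def)
  then have "\<Inter>G \<noteq> {}"
    by auto
  then obtain a where a: "a \<in> \<Inter>G"
    by blast
  have "\<rat> \<subseteq> closure (diff_form_values m E a)"
  proof
    fix q :: real assume "q \<in> \<rat>"
    show "q \<in> closure (diff_form_values m E a)"
      unfolding closure_approachable
    proof (intro allI impI)
      fix e :: real assume "e > 0"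
      then obtain k :: nat where "1 / Suc k < e"
        using nat_approx_posE by blast
      moreover have "a \<in> U (q, k)"
        using a \<open>q \<in> \<rat>\<close> by (auto simp: G_def)
      ultimately show "\<exists>v\<in>diff_form_values m E a. dist v q < e"
        by (force simp: U_def dist_real_def)
    qed
  qed
  then have "closure (diff_form_values m E a) = UNIV"
    using closure_minimal[of \<rat>] Rats_closure_real by (metis closed_closure top.extremum_uniqueI)
  with that show ?thesis .
qed

lemma dense_lin_image_if_frequent_growth:
  assumes "s > 0" "frequent_growth E s"
  shows "\<exists>n a. closure (lin_image n a E) = UNIV"
proof -
  define m where "m = nat \<lceil>1 / s\<rceil> + 1"
  have "1 / s < real m"
    unfolding m_def by linarith
  then have "1 < s * real m"
    using \<open>s > 0\<close> by (simp add: field_simps)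
  then obtain a where "closure (diff_form_values m E a) = UNIV"
    using ex_dense_diff_form_values assms(2) by blast
  then have "closure (lin_image (2 * m) (\<lambda>i. if i < m then a i else - a (i - m)) E) = UNIV"
    using closure_mono[OF diff_form_values_subset_lin_image] by blast
  then show ?thesis
    by blast
qed

theorem theorem1p1:
  fixes E :: "real set"
  shows "(dim_CM E > 0 \<longrightarrow> (\<exists>n a. closure (lin_image n a E) = UNIV))
    \<and> ((\<exists>s>0. \<forall>\<^sub>F r in at_top. real (N_count ({-r<..<r} \<inter> E)) \<ge> r powr s)
         \<longrightarrow> (\<exists>n a. closure (lin_image n a E) = UNIV))"
proof (intro conjI impI)
  assume "dim_CM E > 0"
  then obtain s where "s > 0" "frequent_growth E s"
    by (rule frequent_growth_if_dim_CM_pos)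
  then show "\<exists>n a. closure (lin_image n a E) = UNIV"
    by (rule dense_lin_image_if_frequent_growth)
next
  assume "\<exists>s>0. \<forall>\<^sub>F r in at_top. real (N_count ({-r<..<r} \<inter> E)) \<ge> r powr s"
  then obtain s where "s > 0" "\<forall>\<^sub>F r in at_top. r powr s \<le> real (N_count ({-r<..<r} \<inter> E))"
    by blast
  then have "frequent_growth E s"
    unfolding frequent_growth_def by (simp add: eventually_frequently)
  with \<open>s > 0\<close> show "\<exists>n a. closure (lin_image n a E) = UNIV"
    by (rule dense_lin_image_if_frequent_growth)
qed

end
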